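(* Let $a\in[-1,1)$. Let $M_3=\big(\int_{-1}^1t^{i+j}\,dt\big)_{0\le i,j\le3}$ and $v_a^{(3)}=\big(1-a,\ \tfrac{1-a^2}{2},\ \tfrac{1-a^3}{3},\ \tfrac{1-a^4}{4}\big)^\top$. Then the (unique) solution $z$ of $M_3z=v_a^{(3)}$ belongs to $(0,\infty)^4$ if and only if $\frac1{\sqrt5}<a<\frac{\sqrt{105}-5}{10}$. *)

theory Defs
  imports "HOL-Analysis.Analysis" "HOL-Library.Numeral_Type"
begin

text \<open>Indices 0..3 of vectors in real^4: the index type 4 is bit0 (bit0 num1),
  whose elements are represented by the integers 0,1,2,3.\<close>
definition idx4 :: "4 \<Rightarrow> nat" where
  "idx4 i = nat (Rep_bit0 i)"

definition M3 :: "real^4^4" where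
  "M3 = (\<chi> i j. integral {-1..1} (\<lambda>t::real. t ^ (idx4 i + idx4 j)))"

definition v3 :: "real \<Rightarrow> real^4" where
  "v3 a = (\<chi> i. (1 - a ^ (idx4 i + 1)) / real (idx4 i + 1))"

end

theory Submission
  imports Defs
begin

text \<open>Since \<open>\<integral>\<^sub>-\<^sub>1\<^sup>1 t\<^sup>k dt\<close> vanishes for odd \<open>k\<close>, the system \<open>M\<^sub>3 z = v\<^sub>a\<close> splits into two
  2x2 systems, one for \<open>(z\<^sub>0, z\<^sub>2)\<close> and one for \<open>(z\<^sub>1, z\<^sub>3)\<close>. Solving them gives
  \<open>z\<^sub>0 = (1 - a)(4 - 5a - 5a\<^sup>2)/8\<close>, \<open>z\<^sub>1 = 15(1 - a\<^sup>2)(3 - 7a\<^sup>2)/32\<close>, \<open>z\<^sub>2 = 15a(1 - a\<^sup>2)/8\<close> and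
  \<open>z\<^sub>3 = 35(1 - a\<^sup>2)(5a\<^sup>2 - 1)/32\<close>. Positivity of \<open>z\<^sub>2\<close> excludes \<open>a = -1\<close> and forces \<open>a > 0\<close>;
  then \<open>z\<^sub>3 > 0\<close> means \<open>a > 1/\<surd>5\<close> and \<open>z\<^sub>0 > 0\<close> means that \<open>a\<close> lies below the positive root
  \<open>(\<surd>105 - 5)/10\<close> of \<open>5a\<^sup>2 + 5a - 4\<close>. These two bounds give \<open>a\<^sup>2 < 2/5 < 3/7\<close>, so \<open>z\<^sub>1 > 0\<close>
  comes for free.\<close>

lemma has_integral_power:
  fixes a b :: real
  assumes "a \<le> b"
  shows "((\<lambda>x. x ^ k) has_integral (b ^ Suc k - a ^ Suc k) / Suc k) {a..b}"
proof -
  have "((\<lambda>x. x ^ k) has_integral b ^ Suc k / Suc k - a ^ Suc k / Suc k) {a..b}"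
  proof (rule fundamental_theorem_of_calculus)
    show "((\<lambda>x. x ^ Suc k / Suc k) has_vector_derivative x ^ k) (at x within {a..b})" for x :: real
      unfolding has_real_derivative_iff_has_vector_derivative [symmetric]
      by (rule derivative_eq_intros | simp del: of_nat_Suc)+
  qed (use assms in auto)
  then show ?thesis
    by (simp add: diff_divide_distrib)
qed

lemma integral_power_minus_one_one:
  "integral {-1..1} (\<lambda>x::real. x ^ k) = (if even k then 2 / Suc k else 0)"
  using integral_unique [OF has_integral_power [of "-1" 1 k]] by simp

lemma idx4_numerals [simp]: "idx4 1 = 1" "idx4 2 = 2" "idx4 3 = 3" "idx4 4 = 0"
  by (simp_all add: idx4_def bit0.Rep_numeral bit0.Rep_1)

text \<open>In \<open>real^4\<close> the index \<open>4\<close> equals \<open>0\<close>, so \<open>z$4\<close> is the paper's \<open>z\<^sub>0\<close>.\<close>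

lemma M3_mult_eq_v3_iff:
  "M3 *v z = v3 a \<longleftrightarrow>
     2 * z$4 + 2/3 * z$2 = 1 - a \<and>
     2/3 * z$1 + 2/5 * z$3 = (1 - a^2) / 2 \<and>
     2/3 * z$4 + 2/5 * z$2 = (1 - a^3) / 3 \<and>
     2/5 * z$1 + 2/7 * z$3 = (1 - a^4) / 4"
  unfolding vec_eq_iff forall_4 matrix_vector_mult_def UNIV_4 M3_def v3_def
  by (simp add: integral_power_minus_one_one algebra_simps) (auto simp: eval_nat_numeral algebra_simps)

definition moment_solution :: "real \<Rightarrow> real^4" where
  "moment_solution a = (\<chi> i. [(1 - a) * (4 - 5*a - 5*a^2) / 8, (1 - a^2) * (3 - 7*a^2) * 15 / 32,
                             a * (1 - a^2) * 15 / 8, (1 - a^2) * (5*a^2 - 1) * 35 / 32] ! idx4 i)"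

lemma M3_mult_eq_v3_iff_moment_solution: "M3 *v z = v3 a \<longleftrightarrow> z = moment_solution a"
proof
  assume "M3 *v z = v3 a"
  from this [unfolded M3_mult_eq_v3_iff] show "z = moment_solution a"
    unfolding vec_eq_iff forall_4 moment_solution_def
    by (simp add: algebra_simps eval_nat_numeral)
next
  assume "z = moment_solution a"
  then show "M3 *v z = v3 a"
    unfolding M3_mult_eq_v3_iff moment_solution_def
    by (simp add: field_simps) (simp add: algebra_simps eval_nat_numeral)
qed

lemma moment_solution_pos_iff:
  fixes a :: real
  assumes "-1 \<le> a" and "a < 1"
  shows "(\<forall>i. 0 < moment_solution a $ i) \<longleftrightarrow> 0 < a \<and> 1 < 5 * a^2 \<and> 5 * a^2 + 5 * a < 4"
proof -
  have "(\<forall>i. 0 < moment_solution a $ i) \<longleftrightarrow>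
      0 < (1 - a) * (4 - 5*a - 5*a^2) \<and> 0 < (1 - a^2) * (3 - 7*a^2) \<and>
      0 < a * (1 - a^2) \<and> 0 < (1 - a^2) * (5*a^2 - 1)"
    unfolding forall_4 moment_solution_def by auto
  also have "\<dots> \<longleftrightarrow> 0 < a \<and> 1 < 5 * a^2 \<and> 5 * a^2 + 5 * a < 4"
  proof
    assume "0 < (1 - a) * (4 - 5*a - 5*a^2) \<and> 0 < (1 - a^2) * (3 - 7*a^2) \<and>
      0 < a * (1 - a^2) \<and> 0 < (1 - a^2) * (5*a^2 - 1)"
    then have z0: "0 < (1 - a) * (4 - 5*a - 5*a^2)" and z2: "0 < a * (1 - a^2)"
      and z3: "0 < (1 - a^2) * (5*a^2 - 1)"
      by blast+
    have "a \<noteq> -1"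
      using z2 by auto
    with assms have "0 < (1 - a) * (1 + a)"
      by (intro mult_pos_pos) auto
    then have one_minus_sq: "0 < 1 - a^2"
      by (simp add: power2_eq_square algebra_simps)
    have "0 < a"
      using z2 one_minus_sq by (rule zero_less_mult_pos2)
    moreover have "0 < 5*a^2 - 1"
      using z3 one_minus_sq by (rule zero_less_mult_pos)
    moreover have "0 < 4 - 5*a - 5*a^2"
      using z0 by (rule zero_less_mult_pos) (use assms in simp)
    ultimately show "0 < a \<and> 1 < 5 * a^2 \<and> 5 * a^2 + 5 * a < 4"
      by simp
  next
    assume bounds: "0 < a \<and> 1 < 5 * a^2 \<and> 5 * a^2 + 5 * a < 4"
    have "2/5 < a"
    proof (rule ccontr)
      assume "\<not> 2/5 < a"
      then have "a * a \<le> 2/5 * (2/5)"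
        using bounds by (intro mult_mono) auto
      with bounds show False
        by (simp add: power2_eq_square)
    qed
    with bounds have "a^2 < 2/5"
      by linarith
    with bounds assms show "0 < (1 - a) * (4 - 5*a - 5*a^2) \<and> 0 < (1 - a^2) * (3 - 7*a^2) \<and>
        0 < a * (1 - a^2) \<and> 0 < (1 - a^2) * (5*a^2 - 1)"
      by (simp add: mult_pos_pos)
  qed
  finally show ?thesis .
qed

lemma one_div_sqrt5_less_iff: "1 / sqrt 5 < a \<longleftrightarrow> 0 < a \<and> 1 < 5 * a^2"
proof -
  have "1 / sqrt 5 < a \<longleftrightarrow> 1 < a * sqrt 5"
    by (simp add: pos_divide_less_eq)
  also have "\<dots> \<longleftrightarrow> 0 < a \<and> 1 < sqrt (5 * a^2)"
    using mult_nonpos_nonneg [of a "sqrt 5"] by (cases "0 < a") (auto simp: real_sqrt_mult mult.commute)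
  also have "\<dots> \<longleftrightarrow> 0 < a \<and> 1 < 5 * a^2"
    by simp
  finally show ?thesis .
qed

lemma less_sqrt105_iff:
  assumes "-1/2 \<le> a"
  shows "a < (sqrt 105 - 5) / 10 \<longleftrightarrow> 5 * a^2 + 5 * a < 4"
proof -
  have "a < (sqrt 105 - 5) / 10 \<longleftrightarrow> 10 * a + 5 < sqrt 105"
    by auto
  also have "\<dots> \<longleftrightarrow> sqrt ((10 * a + 5)^2) < sqrt 105"
    using assms by simp
  also have "\<dots> \<longleftrightarrow> 5 * a^2 + 5 * a < 4"
    unfolding real_sqrt_less_iff by (auto simp: power2_eq_square algebra_simps)
  finally show ?thesis .
qed

theorem lemma4p3:
  fixes a :: real
  assumes "-1 \<le> a" and "a < 1"
  shows "(\<exists>!z :: real^4. M3 *v z = v3 a) \<and>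
         (\<forall>z :: real^4. M3 *v z = v3 a \<longrightarrow>
            ((\<forall>i. z $ i > 0) \<longleftrightarrow> (1 / sqrt 5 < a \<and> a < (sqrt 105 - 5) / 10)))"
proof -
  have bounds: "1 / sqrt 5 < a \<and> a < (sqrt 105 - 5) / 10 \<longleftrightarrow>
      0 < a \<and> 1 < 5 * a^2 \<and> 5 * a^2 + 5 * a < 4"
    unfolding one_div_sqrt5_less_iff conj_assoc by (intro conj_cong refl less_sqrt105_iff) simp
  show ?thesis
    unfolding M3_mult_eq_v3_iff_moment_solution bounds moment_solution_pos_iff [OF assms, symmetric]
    by simp
qed

end
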